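(* Let $X$ be a set of pointed Kripke models, $\Lambda$ a normal modal logic sound with respect to $X$, $D\subseteq\boldsymbol{\mathcal{L}}_{\Lambda}$ a $\Lambda$-representative descriptor for $X$, and $d_w\in\mathcal{D}_{(X,D)}$. Then every clean map $\boldsymbol{f}:X_{\boldsymbol{\mathcal{L}}_{\Lambda}}\to X_{\boldsymbol{\mathcal{L}}_{\Lambda}}$ is uniformly continuous in the metric space $(X_{\boldsymbol{\mathcal{L}}_{\Lambda}},d_w)$ (where $X_D=X_{\boldsymbol{\mathcal{L}}_{\Lambda}}$).
   Context: Signature: countable non-empty sets $\Phi$ (atoms) and $\mathcal{I}$ (indices); $\mathcal{L}$: $\varphi ::= \top\mid p\mid\neg\varphi\mid\varphi\wedge\varphi\mid\Box_i\varphi$. Kripke models $M=(\llbracket M\rrbracket,R,\llbracket\cdot\rrbracket)$ have countable non-empty state sets, relations $R_i$ ($i\in\mathcal{I}$) and atom valuation $\llbracket\cdot\rrbracket$; pointed models $Ms$; standard semantics. For a normal modal logic $\Lambda$, $\boldsymbol{\varphi}$ is the class of formulas $\Lambda$-provably equivalent to $\varphi$, and $\boldsymbol{\mathcal{L}}_{\Lambda}=\{\boldsymbol{\varphi}:\varphi\in\mathcal{L}\}$. A descriptor for $X$ is a set $D\subseteq\boldsymbol{\mathcal{L}}_{\Lambda}$; $X_D=\{\boldsymbol{x}_D:x\in X\}$ with $\boldsymbol{x}_D=\{y\in X:\forall\boldsymbol{\varphi}\in D,\ y\models\varphi\iff x\models\varphi\}$. $D$ is $\Lambda$-representative if for every $\varphi\in\mathcal{L}$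 there is $\{\boldsymbol{\psi}_i\}_{i\in I}\subseteq D$ such that for every $J\subseteq I$ the set $\{\psi_i\}_{i\in J}\cup\{\neg\psi_i\}_{i\in I\setminus J}$ $\Lambda$-entails $\varphi$ or $\neg\varphi$. With an enumeration $\boldsymbol{\varphi}_1,\boldsymbol{\varphi}_2,\dots$ of $D$, a weight function is $w:D\to\mathbb{R}_{>0}$ with $\sum_k w(\boldsymbol{\varphi}_k)<\infty$, and $d_w(\boldsymbol{x},\boldsymbol{y})=\sum_k w(\boldsymbol{\varphi}_k)d_k(\boldsymbol{x},\boldsymbol{y})$ where $d_k=0$ if $x,y$ agree on $\varphi_k$ and $1$ otherwise; $\mathcal{D}_{(X,D)}$ is the set of all such $d_w$. A multi-pointed action model is $\Sigma\Gamma=(\llbracket\Sigma\rrbracket,\mathsf{R},pre,post,\Gamma)$ with $\llbracket\Sigma\rrbracket$ a countable non-empty set of actions, $\mathsf{R}_i\subseteq\llbracket\Sigma\rrbracket^2$ for $i\in\mathcal{I}$, $pre:\llbracket\Sigma\rrbracket\to\mathcal{L}$, $post:\llbracket\Sigma\rrbracket\to\mathcal{L}$ with each $post(\sigma)$ either $\top$ or a conjunction of literals over $\Phi$, and $\emptyset\neq\Gamma\subseteq\llbracket\Sigma\rrbracket$. It is precondition finite if $\{\boldsymbol{pre(\sigma)}:\sigma\in\llbracket\Sigma\rrbracket\}$ is finite; exhaustive over $X$ if every $x\in X$ satisfies $pre(\sigma)$ for some $\sigma\in\Gamma$; deterministic over $X$ if every $x\in X$ satisfies $pre(\sigma)\wedge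 pre(\sigma')\to\bot$ for all $\sigma\neq\sigma'\in\Gamma$. For such $\Sigma\Gamma$ and $Ms\in X$, the product update $Ms\otimes\Sigma\Gamma$ has states $\{(s,\sigma):Ms\models pre(\sigma)\}$, relations $R'_i=\{((s,\sigma),(t,\tau)):(s,t)\in R_i,(\sigma,\tau)\in\mathsf{R}_i\}$, valuation $\llbracket p\rrbracket'=\{(s,\sigma):s\in\llbracket p\rrbracket, post(\sigma)\not\models\neg p\}\cup\{(s,\sigma):post(\sigma)\models p\}$, and designated state $(s,\sigma)$ for the $\sigma\in\Gamma$ with $Ms\models pre(\sigma)$. $\Sigma\Gamma$ is closing over $X$ if $x\otimes\Sigma\Gamma\in X$ for all $x\in X$. A map $\boldsymbol{f}:X_{\boldsymbol{\mathcal{L}}_{\Lambda}}\to X_{\boldsymbol{\mathcal{L}}_{\Lambda}}$ is clean if there is a precondition finite multi-pointed action model $\Sigma\Gamma$ closing, deterministic and exhaustive over $X$ with $\boldsymbol{f}(\boldsymbol{x})=\boldsymbol{y}$ iff $x\otimes\Sigma\Gamma\in\boldsymbol{y}$. *)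

theory Defs
  imports "HOL-Analysis.Analysis"
begin

datatype ('p, 'i) fm = Top | Atom 'p | Neg "('p, 'i) fm" | Conj "('p, 'i) fm" "('p, 'i) fm"
  | Box 'i "('p, 'i) fm"

definition Bot :: "('p, 'i) fm" where "Bot = Neg Top"
definition Imp :: "('p, 'i) fm \<Rightarrow> ('p, 'i) fm \<Rightarrow> ('p, 'i) fm" where
  "Imp a b = Neg (Conj a (Neg b))"
definition Iff :: "('p, 'i) fm \<Rightarrow> ('p, 'i) fm \<Rightarrow> ('p, 'i) fm" where
  "Iff a b = Conj (Imp a b) (Imp b a)"

section \<open>Kripke models (states encoded as naturals: countable state sets)\<close>

record ('p, 'i) kripke =
  st  :: "nat set"
  rel :: "'i \<Rightarrow> (nat \<times> nat) set"
  val :: "'p \<Rightarrow> nat set"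

type_synonym ('p, 'i) pmodel = "('p, 'i) kripke \<times> nat"

definition wf_kripke :: "('p, 'i) kripke \<Rightarrow> bool" where
  "wf_kripke M \<longleftrightarrow> st M \<noteq> {} \<and> (\<forall>i. rel M i \<subseteq> st M \<times> st M) \<and> (\<forall>p. val M p \<subseteq> st M)"

definition wf_pointed :: "('p, 'i) pmodel \<Rightarrow> bool" where
  "wf_pointed x \<longleftrightarrow> wf_kripke (fst x) \<and> snd x \<in> st (fst x)"

fun sat :: "('p, 'i) kripke \<Rightarrow> nat \<Rightarrow> ('p, 'i) fm \<Rightarrow> bool" where
  "sat M s Top = True"
| "sat M s (Atom p) = (s \<in> val M p)"
| "sat M s (Neg a) = (\<not> sat M s a)"
| "sat M s (Conj a b) = (sat M s a \<and> sat M s b)"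
| "sat M s (Box i a) = (\<forall>t. (s, t) \<in> rel M i \<longrightarrow> sat M t a)"

definition psat :: "('p, 'i) pmodel \<Rightarrow> ('p, 'i) fm \<Rightarrow> bool" where
  "psat x a = sat (fst x) (snd x) a"

text \<open>Propositional evaluation, treating atoms and boxed formulas as propositional variables.\<close>
fun peval :: "(('p, 'i) fm \<Rightarrow> bool) \<Rightarrow> ('p, 'i) fm \<Rightarrow> bool" where
  "peval v Top = True"
| "peval v (Atom p) = v (Atom p)"
| "peval v (Neg a) = (\<not> peval v a)"
| "peval v (Conj a b) = (peval v a \<and> peval v b)"
| "peval v (Box i a) = v (Box i a)"

definition taut :: "('p, 'i) fm \<Rightarrow> bool" where
  "taut a \<longleftrightarrow> (\<forall>v. peval v a)"

definition pentails :: "('p, 'i) fm \<Rightarrow> ('p, 'i) fm \<Rightarrow> bool" where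
  "pentails a b \<longleftrightarrow> taut (Imp a b)"

fun subst :: "('p \<Rightarrow> ('p, 'i) fm) \<Rightarrow> ('p, 'i) fm \<Rightarrow> ('p, 'i) fm" where
  "subst \<sigma> Top = Top"
| "subst \<sigma> (Atom p) = \<sigma> p"
| "subst \<sigma> (Neg a) = Neg (subst \<sigma> a)"
| "subst \<sigma> (Conj a b) = Conj (subst \<sigma> a) (subst \<sigma> b)"
| "subst \<sigma> (Box i a) = Box i (subst \<sigma> a)"

definition normal_logic :: "('p, 'i) fm set \<Rightarrow> bool" where
  "normal_logic \<Lambda> \<longleftrightarrow>
     (\<forall>a. taut a \<longrightarrow> a \<in> \<Lambda>)
   \<and> (\<forall>i a b. Imp (Box i (Imp a b)) (Imp (Box i a) (Box i b)) \<in> \<Lambda>)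
   \<and> (\<forall>a b. a \<in> \<Lambda> \<longrightarrow> Imp a b \<in> \<Lambda> \<longrightarrow> b \<in> \<Lambda>)
   \<and> (\<forall>i a. a \<in> \<Lambda> \<longrightarrow> Box i a \<in> \<Lambda>)
   \<and> (\<forall>\<sigma> a. a \<in> \<Lambda> \<longrightarrow> subst \<sigma> a \<in> \<Lambda>)"

definition sound_wrt :: "('p, 'i) fm set \<Rightarrow> ('p, 'i) pmodel set \<Rightarrow> bool" where
  "sound_wrt \<Lambda> X \<longleftrightarrow> (\<forall>a\<in>\<Lambda>. \<forall>x\<in>X. psat x a)"

definition lentails :: "('p, 'i) fm set \<Rightarrow> ('p, 'i) fm set \<Rightarrow> ('p, 'i) fm \<Rightarrow> bool" where
  "lentails \<Lambda> G a \<longleftrightarrow> (\<exists>xs. set xs \<subseteq> G \<and> Imp (foldr Conj xs Top) a \<in> \<Lambda>)"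

definition eqc :: "('p, 'i) fm set \<Rightarrow> ('p, 'i) fm \<Rightarrow> ('p, 'i) fm set" where
  "eqc \<Lambda> a = {b. Iff a b \<in> \<Lambda>}"

definition LL :: "('p, 'i) fm set \<Rightarrow> ('p, 'i) fm set set" where
  "LL \<Lambda> = range (eqc \<Lambda>)"

definition xcls :: "('p, 'i) fm set \<Rightarrow> ('p, 'i) pmodel set \<Rightarrow> ('p, 'i) fm set set
                    \<Rightarrow> ('p, 'i) pmodel \<Rightarrow> ('p, 'i) pmodel set" where
  "xcls \<Lambda> X D x = {y \<in> X. \<forall>a. eqc \<Lambda> a \<in> D \<longrightarrow> (psat y a \<longleftrightarrow> psat x a)}"

definition Xcls :: "('p, 'i) fm set \<Rightarrow> ('p, 'i) pmodel set \<Rightarrow> ('p, 'i) fm set set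
                    \<Rightarrow> ('p, 'i) pmodel set set" where
  "Xcls \<Lambda> X D = xcls \<Lambda> X D ` X"

definition representative :: "('p, 'i) fm set \<Rightarrow> ('p, 'i) fm set set \<Rightarrow> bool" where
  "representative \<Lambda> D \<longleftrightarrow>
     (\<forall>a. \<exists>\<Psi>. eqc \<Lambda> ` \<Psi> \<subseteq> D \<and>
        (\<forall>J \<subseteq> \<Psi>. lentails \<Lambda> (J \<union> Neg ` (\<Psi> - J)) a \<or> lentails \<Lambda> (J \<union> Neg ` (\<Psi> - J)) (Neg a)))"

definition weight :: "('p, 'i) fm set set \<Rightarrow> (('p, 'i) fm set \<Rightarrow> real) \<Rightarrow> bool" where
  "weight D w \<longleftrightarrow> (\<forall>C\<in>D. w C > 0) \<and> w summable_on D"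

definition dw :: "('p, 'i) fm set \<Rightarrow> ('p, 'i) fm set set \<Rightarrow> (('p, 'i) fm set \<Rightarrow> real)
                  \<Rightarrow> ('p, 'i) pmodel set \<Rightarrow> ('p, 'i) pmodel set \<Rightarrow> real" where
  "dw \<Lambda> D w A B =
     (\<Sum>\<^sub>\<infinity>C\<in>D. w C * (let a = (SOME a. eqc \<Lambda> a = C); x = (SOME x. x \<in> A); y = (SOME y. y \<in> B)
                      in if psat x a \<longleftrightarrow> psat y a then 0 else 1))"

definition unif_cont_on :: "'a set \<Rightarrow> ('a \<Rightarrow> 'a \<Rightarrow> real) \<Rightarrow> ('a \<Rightarrow> 'a) \<Rightarrow> bool" where
  "unif_cont_on S d f \<longleftrightarrow>
     (\<forall>e>0. \<exists>\<delta>>0. \<forall>a\<in>S. \<forall>b\<in>S. d a b < \<delta> \<longrightarrow> d (f a) (f b) < e)"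

section \<open>Action models and product update (actions encoded as naturals)\<close>

record ('p, 'i) amodel =
  act  :: "nat set"
  arel :: "'i \<Rightarrow> (nat \<times> nat) set"
  pre  :: "nat \<Rightarrow> ('p, 'i) fm"
  post :: "nat \<Rightarrow> ('p, 'i) fm"

fun is_literal :: "('p, 'i) fm \<Rightarrow> bool" where
  "is_literal (Atom p) = True"
| "is_literal (Neg (Atom p)) = True"
| "is_literal _ = False"

fun is_lit_conj :: "('p, 'i) fm \<Rightarrow> bool" where
  "is_lit_conj (Conj a b) = (is_lit_conj a \<and> is_lit_conj b)"
| "is_lit_conj a = is_literal a"

definition wf_action :: "('p, 'i) amodel \<Rightarrow> nat set \<Rightarrow> bool" where
  "wf_action A G \<longleftrightarrow> act A \<noteq> {} \<and> (\<forall>i. arel A i \<subseteq> act A \<times> act A)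
     \<and> (\<forall>\<sigma>\<in>act A. post A \<sigma> = Top \<or> is_lit_conj (post A \<sigma>))
     \<and> G \<noteq> {} \<and> G \<subseteq> act A"

definition precondition_finite :: "('p, 'i) fm set \<Rightarrow> ('p, 'i) amodel \<Rightarrow> bool" where
  "precondition_finite \<Lambda> A \<longleftrightarrow> finite ((\<lambda>\<sigma>. eqc \<Lambda> (pre A \<sigma>)) ` act A)"

definition exhaustive :: "('p, 'i) pmodel set \<Rightarrow> ('p, 'i) amodel \<Rightarrow> nat set \<Rightarrow> bool" where
  "exhaustive X A G \<longleftrightarrow> (\<forall>x\<in>X. \<exists>\<sigma>\<in>G. psat x (pre A \<sigma>))"

definition deterministic :: "('p, 'i) pmodel set \<Rightarrow> ('p, 'i) amodel \<Rightarrow> nat set \<Rightarrow> bool" where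
  "deterministic X A G \<longleftrightarrow>
     (\<forall>x\<in>X. \<forall>\<sigma>\<in>G. \<forall>\<sigma>'\<in>G. \<sigma> \<noteq> \<sigma>' \<longrightarrow> psat x (Imp (Conj (pre A \<sigma>) (pre A \<sigma>')) Bot))"

definition upd_model :: "('p, 'i) kripke \<Rightarrow> ('p, 'i) amodel \<Rightarrow> ('p, 'i) kripke" where
  "upd_model M A =
     (let S = {(s, \<sigma>). s \<in> st M \<and> \<sigma> \<in> act A \<and> sat M s (pre A \<sigma>)} in
      \<lparr> st = prod_encode ` S,
        rel = (\<lambda>i. {(prod_encode (s, \<sigma>), prod_encode (t, \<tau>)) | s \<sigma> t \<tau>.
                    (s, \<sigma>) \<in> S \<and> (t, \<tau>) \<in> S \<and> (s, t) \<in> rel M i \<and> (\<sigma>, \<tau>) \<in> arel A i}),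
        val = (\<lambda>p. prod_encode ` {(s, \<sigma>) \<in> S.
                    (s \<in> val M p \<and> \<not> pentails (post A \<sigma>) (Neg (Atom p)))
                    \<or> pentails (post A \<sigma>) (Atom p)}) \<rparr>)"

definition update :: "('p, 'i) pmodel \<Rightarrow> ('p, 'i) amodel \<Rightarrow> nat set \<Rightarrow> ('p, 'i) pmodel" where
  "update x A G =
     (upd_model (fst x) A, prod_encode (snd x, SOME \<sigma>. \<sigma> \<in> G \<and> psat x (pre A \<sigma>)))"

definition closing :: "('p, 'i) pmodel set \<Rightarrow> ('p, 'i) amodel \<Rightarrow> nat set \<Rightarrow> bool" where
  "closing X A G \<longleftrightarrow> (\<forall>x\<in>X. update x A G \<in> X)"

definition clean :: "('p, 'i) fm set \<Rightarrow> ('p, 'i) pmodel set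
                     \<Rightarrow> (('p, 'i) pmodel set \<Rightarrow> ('p, 'i) pmodel set) \<Rightarrow> bool" where
  "clean \<Lambda> X f \<longleftrightarrow>
     (\<forall>a\<in>Xcls \<Lambda> X (LL \<Lambda>). f a \<in> Xcls \<Lambda> X (LL \<Lambda>)) \<and>
     (\<exists>A G. wf_action A G \<and> precondition_finite \<Lambda> A \<and> closing X A G
        \<and> deterministic X A G \<and> exhaustive X A G
        \<and> (\<forall>x\<in>X. \<forall>b\<in>Xcls \<Lambda> X (LL \<Lambda>).
              f (xcls \<Lambda> X (LL \<Lambda>) x) = b \<longleftrightarrow> update x A G \<in> b))"

end

theory Submission
  imports Defs
begin

(* Two finiteness facts drive the argument.  First, by induction on formulas, at every point
   reachable from X the truth of a formula after the product update at action \<tau> is equivalent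
   to the truth, before the update, of one of finitely many formulas; precondition finiteness
   keeps the Box case finite.  Hence every formula at x \<otimes> \<Sigma>\<Gamma> is determined by finitely many
   formulas at x.  Second, representativeness together with compactness of the Cantor space
   over \<Psi> shows that every formula is determined on X by finitely many members of D.
   Given e > 0, pick a finite F \<subseteq> D carrying all but e of the weight; the finitely many classes
   E \<subseteq> D that determine F after the update have a positive minimal weight \<delta>, and d_w < \<delta>
   forces agreement on E. *)

text \<open>The representative of a class that \<open>dw\<close> evaluates.\<close>

definition canon :: "('p, 'i) fm set \<Rightarrow> ('p, 'i) fm set \<Rightarrow> ('p, 'i) fm" where
  "canon \<Lambda> C = (SOME a. eqc \<Lambda> a = C)"

definition Conjs :: "('p, 'i) fm set \<Rightarrow> ('p, 'i) fm" where
  "Conjs K = foldr Conj (SOME xs. set xs = K) Top"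

definition agree_on :: "('p, 'i) fm set \<Rightarrow> ('p, 'i) pmodel \<Rightarrow> ('p, 'i) pmodel \<Rightarrow> bool" where
  "agree_on \<Phi> x y \<longleftrightarrow> (\<forall>\<phi>\<in>\<Phi>. psat x \<phi> = psat y \<phi>)"

lemma sat_foldr_Conj: "sat M t (foldr Conj xs Top) \<longleftrightarrow> (\<forall>e\<in>set xs. sat M t e)"
  by (induct xs) auto

lemma sat_Conjs: "finite K \<Longrightarrow> sat M t (Conjs K) \<longleftrightarrow> (\<forall>\<phi>\<in>K. sat M t \<phi>)"
  unfolding Conjs_def sat_foldr_Conj by (metis (mono_tags, lifting) finite_list someI_ex)

lemma sat_Imp: "sat M t (Imp a b) \<longleftrightarrow> (sat M t a \<longrightarrow> sat M t b)"
  by (simp add: Imp_def)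

lemma sat_Iff: "sat M t (Iff a b) \<longleftrightarrow> (sat M t a \<longleftrightarrow> sat M t b)"
  by (auto simp: Iff_def Imp_def)

lemma normal_logic_taut: "normal_logic \<Lambda> \<Longrightarrow> taut a \<Longrightarrow> a \<in> \<Lambda>"
  unfolding normal_logic_def by blast

lemma normal_logic_necessitation: "normal_logic \<Lambda> \<Longrightarrow> a \<in> \<Lambda> \<Longrightarrow> Box i a \<in> \<Lambda>"
  unfolding normal_logic_def by blast

lemma eqc_refl: "normal_logic \<Lambda> \<Longrightarrow> a \<in> eqc \<Lambda> a"
  by (simp add: eqc_def normal_logic_taut taut_def Iff_def Imp_def)

lemma canon_equiv: "normal_logic \<Lambda> \<Longrightarrow> Iff (canon \<Lambda> (eqc \<Lambda> a)) a \<in> \<Lambda>"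
proof -
  assume nl: "normal_logic \<Lambda>"
  have "eqc \<Lambda> (canon \<Lambda> (eqc \<Lambda> a)) = eqc \<Lambda> a"
    unfolding canon_def by (rule someI) (rule refl)
  with eqc_refl[OF nl, of a] show ?thesis by (auto simp: eqc_def)
qed

subsection \<open>Points reachable from X\<close>

definition reachable :: "('p, 'i) pmodel set \<Rightarrow> ('p, 'i) pmodel set" where
  "reachable X = {(fst x, t) | x t. x \<in> X \<and> (snd x, t) \<in> (\<Union>i. rel (fst x) i)\<^sup>*}"

lemma reachable_base: "x \<in> X \<Longrightarrow> (fst x, snd x) \<in> reachable X"
  unfolding reachable_def by blast

lemma reachable_step: "(M, t) \<in> reachable X \<Longrightarrow> (t, u) \<in> rel M i \<Longrightarrow> (M, u) \<in> reachable X"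
  unfolding reachable_def by (auto intro: rtrancl_into_rtrancl)

lemma reachable_wf:
  assumes "\<forall>x\<in>X. wf_pointed x" and "(M, t) \<in> reachable X"
  shows "wf_kripke M" and "t \<in> st M"
proof -
  obtain x where x: "x \<in> X" "M = fst x" "(snd x, t) \<in> (\<Union>i. rel M i)\<^sup>*"
    using assms(2) unfolding reachable_def by blast
  show wk: "wf_kripke M" using assms(1) x by (simp add: wf_pointed_def)
  from x(3) show "t \<in> st M"
  proof (induct rule: rtrancl_induct)
    case base then show ?case using assms(1) x by (simp add: wf_pointed_def)
  next
    case step then show ?case using wk by (auto simp: wf_kripke_def)
  qed
qed

text \<open>Necessitation propagates soundness from the points of X to everything reachable from them.\<close>

lemma reachable_sound:
  assumes nl: "normal_logic \<Lambda>" and so: "sound_wrt \<Lambda> X" and "(M, t) \<in> reachable X"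
    and "a \<in> \<Lambda>"
  shows "sat M t a"
proof -
  obtain x where x: "x \<in> X" "M = fst x" "(snd x, t) \<in> (\<Union>i. rel M i)\<^sup>*"
    using assms(3) unfolding reachable_def by blast
  from x(3) have "\<forall>a\<in>\<Lambda>. sat M t a"
  proof (induct rule: rtrancl_induct)
    case base then show ?case using so x by (auto simp: sound_wrt_def psat_def)
  next
    case (step s u)
    then obtain i where "(s, u) \<in> rel M i" by blast
    with step(3) show ?case using normal_logic_necessitation[OF nl] by fastforce
  qed
  with assms(4) show ?thesis by blast
qed

lemma sat_canon_reachable:
  assumes "normal_logic \<Lambda>" "sound_wrt \<Lambda> X" "(M, t) \<in> reachable X"
  shows "sat M t (canon \<Lambda> (eqc \<Lambda> a)) \<longleftrightarrow> sat M t a"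
  using reachable_sound[OF assms canon_equiv[OF assms(1)]] by (simp only: sat_Iff)

lemma psat_canon:
  assumes "normal_logic \<Lambda>" "sound_wrt \<Lambda> X" "x \<in> X"
  shows "psat x (canon \<Lambda> (eqc \<Lambda> a)) \<longleftrightarrow> psat x a"
  using sat_canon_reachable[OF assms(1,2) reachable_base[OF assms(3)]] by (simp add: psat_def)

lemma upd_model_val:
  "prod_encode (t, \<tau>) \<in> val (upd_model M A) p \<longleftrightarrow>
   t \<in> st M \<and> \<tau> \<in> act A \<and> sat M t (pre A \<tau>) \<and>
   ((t \<in> val M p \<and> \<not> pentails (post A \<tau>) (Neg (Atom p))) \<or> pentails (post A \<tau>) (Atom p))"
  unfolding upd_model_def Let_def by (simp add: inj_image_mem_iff[OF inj_prod_encode[of UNIV]])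

lemma upd_model_rel:
  "(prod_encode (t, \<tau>), v) \<in> rel (upd_model M A) i \<longleftrightarrow>
   (\<exists>u \<tau>'. v = prod_encode (u, \<tau>') \<and> t \<in> st M \<and> \<tau> \<in> act A \<and> sat M t (pre A \<tau>)
     \<and> u \<in> st M \<and> \<tau>' \<in> act A \<and> sat M u (pre A \<tau>') \<and> (t, u) \<in> rel M i \<and> (\<tau>, \<tau>') \<in> arel A i)"
  unfolding upd_model_def Let_def by simp

lemma sat_upd_model_Box:
  assumes "wf_kripke M" "t \<in> st M" "\<tau> \<in> act A" "sat M t (pre A \<tau>)"
  shows "sat (upd_model M A) (prod_encode (t, \<tau>)) (Box i a) \<longleftrightarrow>
    (\<forall>\<tau>' u. \<tau>' \<in> act A \<longrightarrow> (\<tau>, \<tau>') \<in> arel A i \<longrightarrow> (t, u) \<in> rel M i \<longrightarrow> sat M u (pre A \<tau>')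
       \<longrightarrow> sat (upd_model M A) (prod_encode (u, \<tau>')) a)"
proof -
  have "(prod_encode (t, \<tau>), v) \<in> rel (upd_model M A) i \<longleftrightarrow>
      (\<exists>u \<tau>'. v = prod_encode (u, \<tau>') \<and> \<tau>' \<in> act A \<and> (\<tau>, \<tau>') \<in> arel A i
         \<and> (t, u) \<in> rel M i \<and> sat M u (pre A \<tau>'))" for v
    using assms by (auto simp: upd_model_rel wf_kripke_def)
  then show ?thesis by (simp only: sat.simps) blast
qed

lemma update_designated:
  assumes "deterministic X A G" "x \<in> X" "\<sigma> \<in> G" "psat x (pre A \<sigma>)"
  shows "update x A G = (upd_model (fst x) A, prod_encode (snd x, \<sigma>))"
proof -
  have "(SOME \<sigma>'. \<sigma>' \<in> G \<and> psat x (pre A \<sigma>')) = \<sigma>"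
  proof (rule some_equality)
    fix \<sigma>' assume "\<sigma>' \<in> G \<and> psat x (pre A \<sigma>')"
    then show "\<sigma>' = \<sigma>"
      using assms unfolding deterministic_def by (auto simp: psat_def Imp_def Bot_def)
  qed (use assms in blast)
  then show ?thesis by (simp add: update_def)
qed

subsection \<open>Reduction of formulas across the update\<close>

definition reduces_to ::
    "('p, 'i) pmodel set \<Rightarrow> ('p, 'i) amodel \<Rightarrow> ('p, 'i) fm \<Rightarrow> nat \<Rightarrow> ('p, 'i) fm \<Rightarrow> bool" where
  "reduces_to X A a \<tau> \<phi> \<longleftrightarrow> (\<forall>M t. (M, t) \<in> reachable X \<longrightarrow> sat M t (pre A \<tau>) \<longrightarrow>
      (sat (upd_model M A) (prod_encode (t, \<tau>)) a \<longleftrightarrow> sat M t \<phi>))"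

definition finitely_reducible :: "('p, 'i) pmodel set \<Rightarrow> ('p, 'i) amodel \<Rightarrow> ('p, 'i) fm \<Rightarrow> bool" where
  "finitely_reducible X A a \<longleftrightarrow> (\<exists>\<Phi>. finite \<Phi> \<and> (\<forall>\<tau>\<in>act A. \<exists>\<phi>\<in>\<Phi>. reduces_to X A a \<tau> \<phi>))"

lemma finitely_reducible_Top: "finitely_reducible X A Top"
  unfolding finitely_reducible_def reduces_to_def by (rule exI[of _ "{Top}"]) simp

lemma finitely_reducible_Atom:
  assumes "\<forall>x\<in>X. wf_pointed x"
  shows "finitely_reducible X A (Atom p)"
  unfolding finitely_reducible_def
proof (rule exI[of _ "{Top, Bot, Atom p}"], intro conjI ballI)
  fix \<tau> assume \<tau>: "\<tau> \<in> act A"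
  have "reduces_to X A (Atom p) \<tau> (if pentails (post A \<tau>) (Atom p) then Top
          else if pentails (post A \<tau>) (Neg (Atom p)) then Bot else Atom p)"
    unfolding reduces_to_def using reachable_wf(2)[OF assms] \<tau>
    by (auto simp: upd_model_val Bot_def)
  then show "\<exists>\<phi>\<in>{Top, Bot, Atom p}. reduces_to X A (Atom p) \<tau> \<phi>" by (auto split: if_splits)
qed simp

lemma finitely_reducible_Neg: "finitely_reducible X A a \<Longrightarrow> finitely_reducible X A (Neg a)"
  unfolding finitely_reducible_def reduces_to_def
  by (metis (no_types, lifting) finite_imageI imageI sat.simps(3))

lemma finitely_reducible_Conj:
  assumes "finitely_reducible X A a" "finitely_reducible X A b"
  shows "finitely_reducible X A (Conj a b)"
proof -
  obtain \<Phi> \<Psi> where "finite \<Phi>" "\<forall>\<tau>\<in>act A. \<exists>\<phi>\<in>\<Phi>. reduces_to X A a \<tau> \<phi>"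
    and "finite \<Psi>" "\<forall>\<tau>\<in>act A. \<exists>\<psi>\<in>\<Psi>. reduces_to X A b \<tau> \<psi>"
    using assms unfolding finitely_reducible_def by blast
  then show ?thesis
    unfolding finitely_reducible_def
    by (intro exI[of _ "case_prod Conj ` (\<Phi> \<times> \<Psi>)"]) (fastforce simp: reduces_to_def)
qed

text \<open>The update at \<open>\<tau>\<close> of \<open>Box i a\<close> reduces to the conjunction of the formulas
  \<open>Box i (pre \<tau>' \<longrightarrow> \<phi>\<^sub>\<tau>\<^sub>')\<close> over the \<open>i\<close>-successors \<open>\<tau>'\<close> of \<open>\<tau>\<close>; replacing each precondition by
  the canonical member of its class makes only finitely many such conjunctions occur.\<close>

lemma finitely_reducible_Box:
  assumes wfX: "\<forall>x\<in>X. wf_pointed x" and nl: "normal_logic \<Lambda>" and so: "sound_wrt \<Lambda> X"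
    and pf: "precondition_finite \<Lambda> A" and IH: "finitely_reducible X A a"
  shows "finitely_reducible X A (Box i a)"
proof -
  obtain \<Phi> where fin\<Phi>: "finite \<Phi>" and "\<forall>\<tau>\<in>act A. \<exists>\<phi>\<in>\<Phi>. reduces_to X A a \<tau> \<phi>"
    using IH unfolding finitely_reducible_def by blast
  then obtain g where g\<Phi>: "\<And>\<tau>. \<tau> \<in> act A \<Longrightarrow> g \<tau> \<in> \<Phi>"
    and g: "\<And>\<tau>. \<tau> \<in> act A \<Longrightarrow> reduces_to X A a \<tau> (g \<tau>)"
    by metis
  define Pc where "Pc = (\<lambda>\<sigma>. eqc \<Lambda> (pre A \<sigma>)) ` act A"
  define guard where "guard = (\<lambda>(c, \<phi>). Box i (Imp (canon \<Lambda> c) \<phi>))"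
  define succs where
    "succs \<tau> = (\<lambda>\<tau>'. (eqc \<Lambda> (pre A \<tau>'), g \<tau>')) ` {\<tau>' \<in> act A. (\<tau>, \<tau>') \<in> arel A i}" for \<tau>
  have fin: "finite (Pc \<times> \<Phi>)" using pf fin\<Phi> by (simp add: Pc_def precondition_finite_def)
  have succs: "succs \<tau> \<subseteq> Pc \<times> \<Phi>" for \<tau> using g\<Phi> by (auto simp: succs_def Pc_def)
  show ?thesis unfolding finitely_reducible_def
  proof (intro exI[of _ "(\<lambda>K. Conjs (guard ` K)) ` Pow (Pc \<times> \<Phi>)"] conjI ballI)
    show "finite ((\<lambda>K. Conjs (guard ` K)) ` Pow (Pc \<times> \<Phi>))" using fin by simp
    fix \<tau> assume \<tau>: "\<tau> \<in> act A"
    have "reduces_to X A (Box i a) \<tau> (Conjs (guard ` succs \<tau>))"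
      unfolding reduces_to_def
    proof (intro allI impI)
      fix M t assume r: "(M, t) \<in> reachable X" and pt: "sat M t (pre A \<tau>)"
      have "finite (guard ` succs \<tau>)" using finite_subset[OF succs fin] by simp
      then have "sat M t (Conjs (guard ` succs \<tau>)) \<longleftrightarrow>
          (\<forall>\<tau>' u. \<tau>' \<in> act A \<longrightarrow> (\<tau>, \<tau>') \<in> arel A i \<longrightarrow> (t, u) \<in> rel M i
             \<longrightarrow> sat M u (canon \<Lambda> (eqc \<Lambda> (pre A \<tau>'))) \<longrightarrow> sat M u (g \<tau>'))"
        by (auto simp: sat_Conjs guard_def succs_def sat_Imp)
      also have "\<dots> \<longleftrightarrow>
          (\<forall>\<tau>' u. \<tau>' \<in> act A \<longrightarrow> (\<tau>, \<tau>') \<in> arel A i \<longrightarrow> (t, u) \<in> rel M i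
             \<longrightarrow> sat M u (pre A \<tau>') \<longrightarrow> sat (upd_model M A) (prod_encode (u, \<tau>')) a)"
        using reachable_step[OF r] sat_canon_reachable[OF nl so] g
        by (auto simp: reduces_to_def)
      also have "\<dots> \<longleftrightarrow> sat (upd_model M A) (prod_encode (t, \<tau>)) (Box i a)"
        using sat_upd_model_Box[OF reachable_wf[OF wfX r] \<tau> pt] by simp
      finally show "sat (upd_model M A) (prod_encode (t, \<tau>)) (Box i a) \<longleftrightarrow>
          sat M t (Conjs (guard ` succs \<tau>))" by simp
    qed
    then show "\<exists>\<phi>\<in>(\<lambda>K. Conjs (guard ` K)) ` Pow (Pc \<times> \<Phi>). reduces_to X A (Box i a) \<tau> \<phi>"
      using succs by blast
  qed
qed

lemma finitely_reducible_all:
  assumes "\<forall>x\<in>X. wf_pointed x" "normal_logic \<Lambda>" "sound_wrt \<Lambda> X" "precondition_finite \<Lambda> A"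
  shows "finitely_reducible X A a"
  by (induction a) (simp_all add: assms finitely_reducible_Top finitely_reducible_Atom
      finitely_reducible_Neg finitely_reducible_Conj finitely_reducible_Box[OF assms])

lemma update_finitely_determined:
  assumes wfX: "\<forall>x\<in>X. wf_pointed x" and nl: "normal_logic \<Lambda>" and so: "sound_wrt \<Lambda> X"
    and wfa: "wf_action A G" and pf: "precondition_finite \<Lambda> A"
    and det: "deterministic X A G" and exh: "exhaustive X A G"
  shows "\<exists>\<Phi>. finite \<Phi> \<and> (\<forall>x\<in>X. \<forall>y\<in>X. agree_on \<Phi> x y \<longrightarrow>
            psat (update x A G) a = psat (update y A G) a)"
proof -
  obtain \<Phi> where fin\<Phi>: "finite \<Phi>" and red: "\<forall>\<tau>\<in>act A. \<exists>\<phi>\<in>\<Phi>. reduces_to X A a \<tau> \<phi>"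
    using finitely_reducible_all[OF wfX nl so pf] unfolding finitely_reducible_def by blast
  define Pre where "Pre = (\<lambda>\<sigma>. canon \<Lambda> (eqc \<Lambda> (pre A \<sigma>))) ` act A"
  have "finite Pre"
    using finite_imageI[OF pf[unfolded precondition_finite_def], of "canon \<Lambda>"]
    by (simp add: Pre_def image_image)
  moreover have "psat (update x A G) a = psat (update y A G) a"
    if x: "x \<in> X" and y: "y \<in> X" and ag: "agree_on (Pre \<union> \<Phi>) x y" for x y
  proof -
    obtain \<sigma> where \<sigma>: "\<sigma> \<in> G" "psat x (pre A \<sigma>)" using exh x by (auto simp: exhaustive_def)
    have \<sigma>A: "\<sigma> \<in> act A" using \<sigma>(1) wfa by (auto simp: wf_action_def)
    have "psat y (pre A \<sigma>)"
      using ag \<sigma>A \<sigma>(2) psat_canon[OF nl so x] psat_canon[OF nl so y]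
      by (auto simp: agree_on_def Pre_def)
    then have ux: "update x A G = (upd_model (fst x) A, prod_encode (snd x, \<sigma>))"
      and uy: "update y A G = (upd_model (fst y) A, prod_encode (snd y, \<sigma>))"
      using update_designated[OF det] x y \<sigma> by auto
    obtain \<phi> where "\<phi> \<in> \<Phi>" "reduces_to X A a \<sigma> \<phi>" using red \<sigma>A by blast
    then show ?thesis
      using ag \<open>psat y (pre A \<sigma>)\<close> \<sigma>(2) reachable_base[OF x] reachable_base[OF y]
      by (auto simp: ux uy psat_def reduces_to_def agree_on_def)
  qed
  ultimately show ?thesis using fin\<Phi> by blast
qed

subsection \<open>Finite determination by a representative descriptor\<close>

text \<open>A property of valuations of \<open>\<Psi>\<close> that is locally determined by finitely many coordinates
  around every point is globally determined by finitely many coordinates: cover the compact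
  space \<open>2\<^sup>\<Psi>\<close> by the basic open sets fixing those coordinates.\<close>

lemma locally_determined_imp_finitely_determined:
  fixes \<Psi> :: "'a set" and V :: "('a \<Rightarrow> bool) set" and Q :: "('a \<Rightarrow> bool) \<Rightarrow> bool"
  assumes local: "\<And>g. \<exists>S. finite S \<and> S \<subseteq> \<Psi> \<and>
                    (\<forall>h\<in>V. \<forall>h'\<in>V. (\<forall>\<psi>\<in>S. h \<psi> = g \<psi> \<and> h' \<psi> = g \<psi>) \<longrightarrow> Q h = Q h')"
  shows "\<exists>S0. finite S0 \<and> S0 \<subseteq> \<Psi> \<and> (\<forall>h\<in>V. \<forall>h'\<in>V. (\<forall>\<psi>\<in>S0. h \<psi> = h' \<psi>) \<longrightarrow> Q h = Q h')"
proof -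
  define S where "S g = (SOME S. finite S \<and> S \<subseteq> \<Psi> \<and>
      (\<forall>h\<in>V. \<forall>h'\<in>V. (\<forall>\<psi>\<in>S. h \<psi> = g \<psi> \<and> h' \<psi> = g \<psi>) \<longrightarrow> Q h = Q h'))" for g
  have S: "finite (S g) \<and> S g \<subseteq> \<Psi> \<and>
      (\<forall>h\<in>V. \<forall>h'\<in>V. (\<forall>\<psi>\<in>S g. h \<psi> = g \<psi> \<and> h' \<psi> = g \<psi>) \<longrightarrow> Q h = Q h')" for g
    unfolding S_def by (rule someI_ex) (rule local)
  then have fin: "\<And>g. finite (S g)" and sub: "\<And>g. S g \<subseteq> \<Psi>"
    and det: "\<And>g h h'. h \<in> V \<Longrightarrow> h' \<in> V \<Longrightarrow> \<forall>\<psi>\<in>S g. h \<psi> = g \<psi> \<and> h' \<psi> = g \<psi> \<Longrightarrow> Q h = Q h'"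
    by blast+
  define T where "T = product_topology (\<lambda>_. discrete_topology (UNIV :: bool set)) \<Psi>"
  define U where "U g = PiE \<Psi> (\<lambda>\<psi>. if \<psi> \<in> S g then {g \<psi>} else UNIV)" for g
  have topT: "topspace T = PiE \<Psi> (\<lambda>_. UNIV)" by (simp add: T_def)
  have compact: "compact_space T" unfolding T_def
    by (simp add: compact_space_product_topology compact_space_discrete_topology)
  have "openin T (U g)" for g
  proof -
    have "{\<psi> \<in> \<Psi>. (if \<psi> \<in> S g then {g \<psi>} else UNIV) \<noteq> topspace (discrete_topology UNIV)} \<subseteq> S g"
      by auto
    then show ?thesis
      unfolding T_def U_def openin_PiE_gen using finite_subset[OF _ fin] by simp
  qed
  moreover have "g \<in> U g" if "g \<in> topspace T" for g
    using that by (simp add: topT U_def PiE_iff)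
  ultimately have "(\<forall>V\<in>U ` topspace T. openin T V) \<and> topspace T \<subseteq> \<Union> (U ` topspace T)"
    by blast
  then have "\<exists>F. finite F \<and> F \<subseteq> U ` topspace T \<and> topspace T \<subseteq> \<Union>F"
    using compact unfolding compact_space_alt by blast
  then obtain F where F: "finite F" "F \<subseteq> U ` topspace T" "topspace T \<subseteq> \<Union>F"
    by blast
  obtain G0 where "finite G0" "F = U ` G0"
    using finite_subset_image[OF F(1,2)] by blast
  with F(3) have cover: "topspace T \<subseteq> \<Union> (U ` G0)" by simp
  show ?thesis
  proof (intro exI[of _ "\<Union> (S ` G0)"] conjI ballI impI)
    show "finite (\<Union> (S ` G0))" using \<open>finite G0\<close> fin by simp
    show "\<Union> (S ` G0) \<subseteq> \<Psi>" using sub by blast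
    fix h h' assume h: "h \<in> V" and h': "h' \<in> V" and ag: "\<forall>\<psi>\<in>\<Union> (S ` G0). h \<psi> = h' \<psi>"
    have "restrict h \<Psi> \<in> topspace T" by (simp add: topT)
    then obtain g where "g \<in> G0" "restrict h \<Psi> \<in> U g" using cover by blast
    then have "\<forall>\<psi>\<in>S g. h \<psi> = g \<psi> \<and> h' \<psi> = g \<psi>"
      using ag sub[of g] by (fastforce simp: U_def PiE_iff)
    then show "Q h = Q h'" using det[OF h h'] by blast
  qed
qed

lemma psat_entailed:
  assumes "sound_wrt \<Lambda> X" "z \<in> X" "Imp (foldr Conj xs Top) a \<in> \<Lambda>" "\<forall>e\<in>set xs. psat z e"
  shows "psat z a"
  using assms by (auto simp: sound_wrt_def psat_def sat_foldr_Conj sat_Imp)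

lemma representative_finitely_determines:
  assumes so: "sound_wrt \<Lambda> X" and rp: "representative \<Lambda> D"
  shows "\<exists>\<Psi>0. finite \<Psi>0 \<and> eqc \<Lambda> ` \<Psi>0 \<subseteq> D \<and> (\<forall>x\<in>X. \<forall>y\<in>X. agree_on \<Psi>0 x y \<longrightarrow> psat x \<phi> = psat y \<phi>)"
proof -
  obtain \<Psi> where \<Psi>D: "eqc \<Lambda> ` \<Psi> \<subseteq> D" and decides: "\<forall>J \<subseteq> \<Psi>.
      lentails \<Lambda> (J \<union> Neg ` (\<Psi> - J)) \<phi> \<or> lentails \<Lambda> (J \<union> Neg ` (\<Psi> - J)) (Neg \<phi>)"
    using rp unfolding representative_def by blast
  have "\<exists>S. finite S \<and> S \<subseteq> \<Psi> \<and>
          (\<forall>h\<in>psat ` X. \<forall>h'\<in>psat ` X. (\<forall>\<psi>\<in>S. h \<psi> = g \<psi> \<and> h' \<psi> = g \<psi>) \<longrightarrow> h \<phi> = h' \<phi>)" for g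
  proof -
    define J where "J = {\<psi> \<in> \<Psi>. g \<psi>}"
    obtain xs where xs: "set xs \<subseteq> J \<union> Neg ` (\<Psi> - J)"
      and ent: "Imp (foldr Conj xs Top) \<phi> \<in> \<Lambda> \<or> Imp (foldr Conj xs Top) (Neg \<phi>) \<in> \<Lambda>"
      using decides unfolding lentails_def J_def by (metis (no_types, lifting) mem_Collect_eq subsetI)
    define S where "S = {\<psi> \<in> \<Psi>. \<psi> \<in> set xs \<or> Neg \<psi> \<in> set xs}"
    have "S \<subseteq> set xs \<union> Neg -` set xs" by (auto simp: S_def)
    moreover have "finite (Neg -` set xs)" by (rule finite_vimageI) (auto simp: inj_def)
    ultimately have "finite S" by (meson finite_Un finite_set finite_subset)
    have "psat z \<phi> \<longleftrightarrow> Imp (foldr Conj xs Top) \<phi> \<in> \<Lambda>"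
      if z: "z \<in> X" and zg: "\<forall>\<psi>\<in>S. psat z \<psi> = g \<psi>" for z
    proof -
      have "\<forall>e\<in>set xs. psat z e" using xs zg by (fastforce simp: S_def J_def psat_def)
      then show ?thesis using ent psat_entailed[OF so z] by (fastforce simp: psat_def)
    qed
    then show ?thesis using \<open>finite S\<close> by (intro exI[of _ S]) (auto simp: S_def)
  qed
  then obtain \<Psi>0 where "finite \<Psi>0" "\<Psi>0 \<subseteq> \<Psi>"
    and det: "\<forall>h\<in>psat ` X. \<forall>h'\<in>psat ` X. (\<forall>\<psi>\<in>\<Psi>0. h \<psi> = h' \<psi>) \<longrightarrow> h \<phi> = h' \<phi>"
    using locally_determined_imp_finitely_determined[of \<Psi> "psat ` X" "\<lambda>h. h \<phi>"] by blast
  show ?thesis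
  proof (intro exI[of _ \<Psi>0] conjI ballI impI)
    show "finite \<Psi>0" by fact
    show "eqc \<Lambda> ` \<Psi>0 \<subseteq> D" using \<open>\<Psi>0 \<subseteq> \<Psi>\<close> \<Psi>D by blast
    fix x y assume "x \<in> X" "y \<in> X" "agree_on \<Psi>0 x y"
    then show "psat x \<phi> = psat y \<phi>" using det unfolding agree_on_def by blast
  qed
qed

lemma update_determined_by_descriptor:
  assumes wfX: "\<forall>x\<in>X. wf_pointed x" and nl: "normal_logic \<Lambda>" and so: "sound_wrt \<Lambda> X"
    and rp: "representative \<Lambda> D" and wfa: "wf_action A G" and pf: "precondition_finite \<Lambda> A"
    and det: "deterministic X A G" and exh: "exhaustive X A G"
  shows "\<exists>E. finite E \<and> E \<subseteq> D \<and> (\<forall>x\<in>X. \<forall>y\<in>X. agree_on (canon \<Lambda> ` E) x y \<longrightarrow>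
            psat (update x A G) a = psat (update y A G) a)"
proof -
  obtain \<Phi> where fin\<Phi>: "finite \<Phi>"
    and upd: "\<forall>x\<in>X. \<forall>y\<in>X. agree_on \<Phi> x y \<longrightarrow> psat (update x A G) a = psat (update y A G) a"
    using update_finitely_determined[OF wfX nl so wfa pf det exh] by blast
  define P where "P \<phi> = (SOME \<Psi>0. finite \<Psi>0 \<and> eqc \<Lambda> ` \<Psi>0 \<subseteq> D \<and>
      (\<forall>x\<in>X. \<forall>y\<in>X. agree_on \<Psi>0 x y \<longrightarrow> psat x \<phi> = psat y \<phi>))" for \<phi>
  have P: "finite (P \<phi>) \<and> eqc \<Lambda> ` P \<phi> \<subseteq> D \<and>
      (\<forall>x\<in>X. \<forall>y\<in>X. agree_on (P \<phi>) x y \<longrightarrow> psat x \<phi> = psat y \<phi>)" for \<phi>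
    unfolding P_def by (rule someI_ex) (rule representative_finitely_determines[OF so rp])
  define E where "E = (\<Union>\<phi>\<in>\<Phi>. eqc \<Lambda> ` P \<phi>)"
  have "finite E" using fin\<Phi> P by (simp add: E_def)
  moreover have "E \<subseteq> D" using P by (auto simp: E_def)
  moreover have "psat (update x A G) a = psat (update y A G) a"
    if x: "x \<in> X" and y: "y \<in> X" and agE: "agree_on (canon \<Lambda> ` E) x y" for x y
  proof -
    have agP: "agree_on (P \<phi>) x y" if "\<phi> \<in> \<Phi>" for \<phi>
      unfolding agree_on_def
    proof
      fix \<psi> assume "\<psi> \<in> P \<phi>"
      then have "canon \<Lambda> (eqc \<Lambda> \<psi>) \<in> canon \<Lambda> ` E" using \<open>\<phi> \<in> \<Phi>\<close> by (auto simp: E_def)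
      then show "psat x \<psi> = psat y \<psi>"
        using agE psat_canon[OF nl so x] psat_canon[OF nl so y] unfolding agree_on_def by metis
    qed
    have "agree_on \<Phi> x y"
      unfolding agree_on_def using P agP x y by blast
    then show ?thesis using upd x y by blast
  qed
  ultimately show ?thesis by (intro exI[of _ E]) simp
qed

lemma update_uniformly_determined:
  assumes "\<forall>x\<in>X. wf_pointed x" "normal_logic \<Lambda>" "sound_wrt \<Lambda> X" "representative \<Lambda> D"
    "wf_action A G" "precondition_finite \<Lambda> A" "deterministic X A G" "exhaustive X A G"
    and "finite \<Phi>"
  shows "\<exists>E. finite E \<and> E \<subseteq> D \<and> (\<forall>x\<in>X. \<forall>y\<in>X. agree_on (canon \<Lambda> ` E) x y \<longrightarrow>
            agree_on \<Phi> (update x A G) (update y A G))"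
  using \<open>finite \<Phi>\<close>
proof (induction \<Phi> rule: finite_induct)
  case empty then show ?case by (intro exI[of _ "{}"]) (simp add: agree_on_def)
next
  case (insert a \<Phi>)
  obtain E where E: "finite E" "E \<subseteq> D" and detE: "\<forall>x\<in>X. \<forall>y\<in>X.
      agree_on (canon \<Lambda> ` E) x y \<longrightarrow> agree_on \<Phi> (update x A G) (update y A G)"
    using insert.IH by blast
  obtain E' where E': "finite E'" "E' \<subseteq> D" and detE': "\<forall>x\<in>X. \<forall>y\<in>X.
      agree_on (canon \<Lambda> ` E') x y \<longrightarrow> psat (update x A G) a = psat (update y A G) a"
    using update_determined_by_descriptor[OF assms(1-8), of a] by blast
  have "agree_on (insert a \<Phi>) (update x A G) (update y A G)"
    if "x \<in> X" "y \<in> X" "agree_on (canon \<Lambda> ` (E \<union> E')) x y" for x y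
  proof -
    have "agree_on (canon \<Lambda> ` E) x y" "agree_on (canon \<Lambda> ` E') x y"
      using that(3) unfolding agree_on_def by blast+
    then have "agree_on \<Phi> (update x A G) (update y A G)"
      and "psat (update x A G) a = psat (update y A G) a"
      using detE detE' that(1,2) by blast+
    then show ?thesis unfolding agree_on_def by simp
  qed
  then show ?case using E E' by (intro exI[of _ "E \<union> E'"]) simp
qed

subsection \<open>The weighted metric\<close>

lemma weight_pos: "weight D w \<Longrightarrow> C \<in> D \<Longrightarrow> w C > 0"
  by (simp add: weight_def)

lemma weighted_disagreement_summable:
  assumes "weight D w"
  shows "(\<lambda>C. w C * (if P C then 0 else 1)) summable_on D"
proof (rule summable_on_comparison_test[of w])
  show "w summable_on D" using assms by (simp add: weight_def)
qed (use weight_pos[OF assms] in \<open>auto simp: less_imp_le\<close>)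

lemma weighted_disagreement_ge:
  assumes "weight D w" "C0 \<in> D" "\<not> P C0"
  shows "w C0 \<le> (\<Sum>\<^sub>\<infinity>C\<in>D. w C * (if P C then 0 else 1))"
proof -
  let ?t = "\<lambda>C. w C * (if P C then 0 else 1)"
  have "w C0 = infsum ?t {C0}" using assms(3) by simp
  also have "\<dots> \<le> infsum ?t D"
    using assms(2) weighted_disagreement_summable[OF assms(1)] weight_pos[OF assms(1)]
    by (intro infsum_mono2) (auto simp: less_imp_le)
  finally show ?thesis .
qed

lemma weighted_disagreement_le_tail:
  assumes "weight D w" "\<forall>C\<in>F. P C"
  shows "(\<Sum>\<^sub>\<infinity>C\<in>D. w C * (if P C then 0 else 1)) \<le> infsum w (D - F)"
proof -
  let ?t = "\<lambda>C. w C * (if P C then 0 else 1)"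
  have "infsum ?t D = infsum ?t (D - F)"
    by (rule infsum_cong_neutral) (use assms(2) in auto)
  also have "\<dots> \<le> infsum w (D - F)"
  proof (rule infsum_mono)
    show "?t summable_on (D - F)"
      using summable_on_subset_banach[OF weighted_disagreement_summable[OF assms(1)]] by blast
    show "w summable_on (D - F)"
      using summable_on_subset_banach assms(1) by (fastforce simp: weight_def)
  qed (use weight_pos[OF assms(1)] in \<open>auto simp: less_imp_le\<close>)
  finally show ?thesis .
qed

lemma weight_tail_small:
  assumes "weight D w" "e > 0"
  shows "\<exists>F. finite F \<and> F \<subseteq> D \<and> infsum w (D - F) < e"
proof -
  have sw: "w summable_on D" using assms(1) by (simp add: weight_def)
  obtain F where F: "finite F" "F \<subseteq> D" "dist (sum w F) (infsum w D) \<le> e / 2"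
    using infsum_finite_approximation[OF sw, of "e / 2"] assms(2) by auto
  have "infsum w D = infsum w F + infsum w (D - F)"
    using infsum_Un_disjoint[of w F "D - F"] summable_on_subset_banach[OF sw, of "D - F"] F(1,2)
    by (simp add: Un_absorb1)
  then show ?thesis using F assms(2) by (intro exI[of _ F]) (auto simp: dist_real_def)
qed

lemma weight_min_pos:
  assumes "weight D w" "finite E" "E \<subseteq> D"
  shows "\<exists>\<delta>>0. \<forall>C\<in>E. \<delta> \<le> w C"
proof (cases "E = {}")
  case False
  then show ?thesis using assms weight_pos[OF assms(1)]
    by (intro exI[of _ "Min (w ` E)"]) auto
qed (auto intro: exI[of _ 1])

lemma dw_xcls:
  assumes "x \<in> X" "y \<in> X"
  shows "dw \<Lambda> D w (xcls \<Lambda> X (LL \<Lambda>) x) (xcls \<Lambda> X (LL \<Lambda>) y) =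
    (\<Sum>\<^sub>\<infinity>C\<in>D. w C * (if psat x (canon \<Lambda> C) = psat y (canon \<Lambda> C) then 0 else 1))"
proof -
  have "psat (SOME z. z \<in> xcls \<Lambda> X (LL \<Lambda>) x) a = psat x a" if "x \<in> X" for x a
  proof -
    have "(SOME z. z \<in> xcls \<Lambda> X (LL \<Lambda>) x) \<in> xcls \<Lambda> X (LL \<Lambda>) x"
      by (rule someI[of _ x]) (simp add: xcls_def that)
    then show ?thesis by (auto simp: xcls_def LL_def)
  qed
  then show ?thesis using assms by (simp add: dw_def Let_def canon_def[symmetric])
qed

lemma dw_small_imp_agree:
  assumes w: "weight D w" and "E \<subseteq> D" "\<forall>C\<in>E. \<delta> \<le> w C" and x: "x \<in> X" and y: "y \<in> X"
    and small: "dw \<Lambda> D w (xcls \<Lambda> X (LL \<Lambda>) x) (xcls \<Lambda> X (LL \<Lambda>) y) < \<delta>"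
  shows "agree_on (canon \<Lambda> ` E) x y"
  unfolding agree_on_def
proof
  fix \<phi> assume "\<phi> \<in> canon \<Lambda> ` E"
  then obtain C where C: "C \<in> E" "\<phi> = canon \<Lambda> C" by blast
  show "psat x \<phi> = psat y \<phi>"
  proof (rule ccontr)
    assume "psat x \<phi> \<noteq> psat y \<phi>"
    then have "w C \<le> dw \<Lambda> D w (xcls \<Lambda> X (LL \<Lambda>) x) (xcls \<Lambda> X (LL \<Lambda>) y)"
      unfolding dw_xcls[OF x y] using C \<open>E \<subseteq> D\<close>
      by (intro weighted_disagreement_ge[OF w]) auto
    then show False using small C \<open>\<forall>C\<in>E. \<delta> \<le> w C\<close> by fastforce
  qed
qed

lemma agree_imp_dw_le_tail:
  assumes "weight D w" "x \<in> X" "y \<in> X" "agree_on (canon \<Lambda> ` F) x y"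
  shows "dw \<Lambda> D w (xcls \<Lambda> X (LL \<Lambda>) x) (xcls \<Lambda> X (LL \<Lambda>) y) \<le> infsum w (D - F)"
  unfolding dw_xcls[OF assms(2,3)] using assms(4)
  by (intro weighted_disagreement_le_tail[OF assms(1),
        where P = "\<lambda>C. psat x (canon \<Lambda> C) = psat y (canon \<Lambda> C)"]) (simp add: agree_on_def)

lemma clean_update:
  assumes "clean \<Lambda> X f"
  obtains A G where "wf_action A G" "precondition_finite \<Lambda> A" "deterministic X A G"
    "exhaustive X A G" "\<And>x. x \<in> X \<Longrightarrow> update x A G \<in> X"
    "\<And>x. x \<in> X \<Longrightarrow> f (xcls \<Lambda> X (LL \<Lambda>) x) = xcls \<Lambda> X (LL \<Lambda>) (update x A G)"
proof -
  obtain A G where "wf_action A G" "precondition_finite \<Lambda> A" "closing X A G"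
    "deterministic X A G" "exhaustive X A G"
    and f: "\<forall>x\<in>X. \<forall>b\<in>Xcls \<Lambda> X (LL \<Lambda>). f (xcls \<Lambda> X (LL \<Lambda>) x) = b \<longleftrightarrow> update x A G \<in> b"
    using assms unfolding clean_def by blast
  moreover have "f (xcls \<Lambda> X (LL \<Lambda>) x) = xcls \<Lambda> X (LL \<Lambda>) (update x A G)"
    if "x \<in> X" "update x A G \<in> X" for x
    using f that by (simp add: Xcls_def xcls_def)
  ultimately show ?thesis using that by (simp add: closing_def)
qed

theorem proposition34:
  fixes X :: "('p::countable, 'i::countable) pmodel set"
    and \<Lambda> :: "('p, 'i) fm set"
    and D :: "('p, 'i) fm set set"
    and w :: "('p, 'i) fm set \<Rightarrow> real"
    and f :: "('p, 'i) pmodel set \<Rightarrow> ('p, 'i) pmodel set"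
  assumes "\<forall>x\<in>X. wf_pointed x"
    and "normal_logic \<Lambda>"
    and "sound_wrt \<Lambda> X"
    and "D \<subseteq> LL \<Lambda>"
    and "representative \<Lambda> D"
    and "weight D w"
    and "clean \<Lambda> X f"
  shows "unif_cont_on (Xcls \<Lambda> X (LL \<Lambda>)) (dw \<Lambda> D w) f"
  unfolding unif_cont_on_def
proof (intro allI impI)
  fix e :: real assume "e > 0"
  obtain A G where act: "wf_action A G" "precondition_finite \<Lambda> A" "deterministic X A G"
      "exhaustive X A G" and closed: "\<And>x. x \<in> X \<Longrightarrow> update x A G \<in> X"
    and f: "\<And>x. x \<in> X \<Longrightarrow> f (xcls \<Lambda> X (LL \<Lambda>) x) = xcls \<Lambda> X (LL \<Lambda>) (update x A G)"
    using clean_update[OF assms(7)] by metis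
  obtain F where F: "finite F" "F \<subseteq> D" "infsum w (D - F) < e"
    using weight_tail_small[OF assms(6) \<open>e > 0\<close>] by blast
  obtain E where E: "finite E" "E \<subseteq> D" and upd: "\<forall>x\<in>X. \<forall>y\<in>X.
      agree_on (canon \<Lambda> ` E) x y \<longrightarrow> agree_on (canon \<Lambda> ` F) (update x A G) (update y A G)"
    using update_uniformly_determined[OF assms(1-3,5) act finite_imageI[OF F(1), of "canon \<Lambda>"]] by blast
  obtain \<delta> where "\<delta> > 0" "\<forall>C\<in>E. \<delta> \<le> w C" using weight_min_pos[OF assms(6) E] by blast
  moreover have "dw \<Lambda> D w (f a) (f b) < e"
    if a: "a \<in> Xcls \<Lambda> X (LL \<Lambda>)" and b: "b \<in> Xcls \<Lambda> X (LL \<Lambda>)" and ab: "dw \<Lambda> D w a b < \<delta>"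
    for a b
  proof -
    obtain x y where xy: "x \<in> X" "y \<in> X" "a = xcls \<Lambda> X (LL \<Lambda>) x" "b = xcls \<Lambda> X (LL \<Lambda>) y"
      using a b by (auto simp: Xcls_def)
    then have "agree_on (canon \<Lambda> ` E) x y"
      using dw_small_imp_agree[OF assms(6) E(2) \<open>\<forall>C\<in>E. \<delta> \<le> w C\<close>] ab by blast
    then have "dw \<Lambda> D w (f a) (f b) \<le> infsum w (D - F)"
      using agree_imp_dw_le_tail[OF assms(6) closed closed] upd xy f by simp
    then show ?thesis using F(3) by simp
  qed
  ultimately show "\<exists>\<delta>>0. \<forall>a\<in>Xcls \<Lambda> X (LL \<Lambda>). \<forall>b\<in>Xcls \<Lambda> X (LL \<Lambda>).
      dw \<Lambda> D w a b < \<delta> \<longrightarrow> dw \<Lambda> D w (f a) (f b) < e" by blast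
qed

end
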